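(* Let $F,G$ be signatures on the same finite variable set $V$ such that the pair $(F,G)$ is linearly independent, but for every partial configuration $p$ of $V$ with $\mathrm{dom}(p)\ne\emptyset$ the pair $(F_p,G_p)$ is linearly dependent. Then there is a configuration $x\in\mathrm{supp}(F)$ such that $\mathrm{supp}(F)\cup\mathrm{supp}(G)=\{x,\overline{x}\}$.
   Context: A signature on a finite set $V$ is a function $F:\{0,1\}^V\to\mathbb{R}_{\ge0}$; $\mathrm{supp}(F)=\{x:F(x)\ne0\}$. A pair $(F,G)$ of signatures on $V$ is linearly dependent if there exist reals $\lambda,\mu$, not both zero, with $\lambda F=\mu G$; otherwise linearly independent. A partial configuration $p$ of $V$ is an element of $\{0,1\}^{\mathrm{dom}(p)}$, $\mathrm{dom}(p)\subseteq V$; the pinning $F_p$ is the signature on $V\setminus\mathrm{dom}(p)$ given by $F_p(x)=F(x,p)$, where $(x,p)$ is the common extension. $\overline{x}$ denotes the complement, $\overline{x}_i=1-x_i$. *)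

theory Defs
  imports "HOL-Library.FuncSet" Complex_Main
begin

text \<open>Configurations of a variable set V: boolean assignments on V (False = 0, True = 1),
  represented extensionally (value undefined outside V).\<close>
definition configs :: "'v set \<Rightarrow> ('v \<Rightarrow> bool) set" where
  "configs V = V \<rightarrow>\<^sub>E (UNIV :: bool set)"

definition is_signature :: "'v set \<Rightarrow> (('v \<Rightarrow> bool) \<Rightarrow> real) \<Rightarrow> bool" where
  "is_signature V F \<longleftrightarrow> (\<forall>x\<in>configs V. F x \<ge> 0)"

definition supp :: "'v set \<Rightarrow> (('v \<Rightarrow> bool) \<Rightarrow> real) \<Rightarrow> ('v \<Rightarrow> bool) set" where
  "supp V F = {x \<in> configs V. F x \<noteq> 0}"

definition lin_dep :: "'v set \<Rightarrow> (('v \<Rightarrow> bool) \<Rightarrow> real) \<Rightarrow> (('v \<Rightarrow> bool) \<Rightarrow> real) \<Rightarrow> bool" where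
  "lin_dep V F G \<longleftrightarrow> (\<exists>l m :: real. (l \<noteq> 0 \<or> m \<noteq> 0) \<and> (\<forall>x\<in>configs V. l * F x = m * G x))"

definition pin :: "'v set \<Rightarrow> ('v \<Rightarrow> bool) \<Rightarrow> (('v \<Rightarrow> bool) \<Rightarrow> real) \<Rightarrow> (('v \<Rightarrow> bool) \<Rightarrow> real)" where
  "pin D p F = (\<lambda>x. F (\<lambda>v. if v \<in> D then p v else x v))"

definition compl_config :: "'v set \<Rightarrow> ('v \<Rightarrow> bool) \<Rightarrow> ('v \<Rightarrow> bool)" where
  "compl_config V x = (\<lambda>v\<in>V. \<not> x v)"

end

theory Submission
  imports Defs
begin

text \<open>
  Linear dependence of (F, G) is equivalent to the vanishing of every
  2x2 minor  F y * G z - F z * G y.  Since (F, G) is independent, some minor at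
  (y, z) is nonzero.  Pinning a single variable v to a common value of two
  configurations reconstructs F and G on them, so dependence of the pinned pair
  forces their minor to vanish; hence y and z disagree everywhere, i.e. z is the
  complement of y.  Finally, a third configuration w differs from y at some
  variable and from z at another, so it agrees with z there and with y at the
  first, making both minors (w, z) and (w, y) vanish; a Pluecker-type identity then
  gives F w = G w = 0.  Thus the joint support is exactly {y, complement of y}, and
  one of y, z lies in supp F since the minor at (y, z) is nonzero.
\<close>

definition minor :: "(('v \<Rightarrow> bool) \<Rightarrow> real) \<Rightarrow> (('v \<Rightarrow> bool) \<Rightarrow> real) \<Rightarrow> ('v \<Rightarrow> bool) \<Rightarrow> ('v \<Rightarrow> bool) \<Rightarrow> real"
  where "minor F G y z = F y * G z - F z * G y"

lemma configs_ext:
  assumes "a \<in> configs V" "b \<in> configs V" "\<And>v. v \<in> V \<Longrightarrow> a v = b v"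
  shows "a = b"
  using assms unfolding configs_def by (auto intro: extensionalityI)

lemma compl_config_in: "y \<in> configs V \<Longrightarrow> compl_config V y \<in> configs V"
  unfolding configs_def compl_config_def by auto

lemma compl_config_compl_config: "y \<in> configs V \<Longrightarrow> compl_config V (compl_config V y) = y"
  by (rule configs_ext[OF compl_config_in[OF compl_config_in]]) (auto simp: compl_config_def)

lemma disagree_everywhere_compl:
  assumes "y \<in> configs V" "z \<in> configs V" "\<And>v. v \<in> V \<Longrightarrow> y v \<noteq> z v"
  shows "z = compl_config V y"
  by (rule configs_ext[OF assms(2) compl_config_in[OF assms(1)]])
     (use assms(3) in \<open>auto simp: compl_config_def\<close>)

lemma lin_dep_iff_minors:
  "lin_dep V F G \<longleftrightarrow> (\<forall>y\<in>configs V. \<forall>z\<in>configs V. minor F G y z = 0)"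
proof
  assume "lin_dep V F G"
  then obtain l m where lm: "l \<noteq> 0 \<or> m \<noteq> 0" and eq: "\<forall>x\<in>configs V. l * F x = m * G x"
    unfolding lin_dep_def by blast
  show "\<forall>y\<in>configs V. \<forall>z\<in>configs V. minor F G y z = 0"
  proof (intro ballI)
    fix y z assume y: "y \<in> configs V" and z: "z \<in> configs V"
    have ey: "l * F y = m * G y" and ez: "l * F z = m * G z" using eq y z by auto
    have "l * minor F G y z = (l * F y) * G z - (l * F z) * G y"
      by (simp add: minor_def algebra_simps)
    also have "\<dots> = (m * G y) * G z - (m * G z) * G y" by (simp only: ey ez)
    finally have "l * minor F G y z = 0" by simp
    have "m * minor F G y z = F y * (m * G z) - F z * (m * G y)"
      by (simp add: minor_def algebra_simps)
    also have "\<dots> = F y * (l * F z) - F z * (l * F y)" by (simp only: ey ez)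
    finally have "m * minor F G y z = 0" by simp
    with \<open>l * minor F G y z = 0\<close> show "minor F G y z = 0" using lm by auto
  qed
next
  assume minors: "\<forall>y\<in>configs V. \<forall>z\<in>configs V. minor F G y z = 0"
  show "lin_dep V F G"
  proof (cases "\<exists>x0\<in>configs V. F x0 \<noteq> 0 \<or> G x0 \<noteq> 0")
    case True
    then obtain x0 where x0: "x0 \<in> configs V" "F x0 \<noteq> 0 \<or> G x0 \<noteq> 0" by blast
    have "\<forall>x\<in>configs V. G x0 * F x = F x0 * G x"
      using minors x0(1) by (auto simp: minor_def algebra_simps)
    then show ?thesis unfolding lin_dep_def using x0(2) by blast
  next
    case False
    then show ?thesis unfolding lin_dep_def by (intro exI[of _ 1] exI[of _ 0]) auto
  qed
qed

lemma pin_restrict: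
  assumes "y \<in> configs V"
  shows "pin D (restrict y D) F (restrict y (V - D)) = F y"
proof -
  have outside: "y u = undefined" if "u \<notin> V" for u
    using assms that unfolding configs_def by (simp add: PiE_def extensional_def)
  have "(\<lambda>u. if u \<in> D then restrict y D u else restrict y (V - D) u) = y"
    by (rule ext) (simp add: outside)
  then show ?thesis unfolding pin_def by simp
qed

lemma agree_minor_zero:
  assumes pinned: "\<And>D p. D \<subseteq> V \<Longrightarrow> D \<noteq> {} \<Longrightarrow> p \<in> configs D \<Longrightarrow>
           lin_dep (V - D) (pin D p F) (pin D p G)"
    and y: "y \<in> configs V" and z: "z \<in> configs V"
    and D: "D \<subseteq> V" "D \<noteq> {}" and agree: "\<And>v. v \<in> D \<Longrightarrow> y v = z v"
  shows "minor F G y z = 0"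
proof -
  define p where "p = restrict y D"
  have p_z: "p = restrict z D" unfolding p_def by (rule restrict_ext) (rule agree)
  have "p \<in> configs D" unfolding p_def configs_def by auto
  then have "lin_dep (V - D) (pin D p F) (pin D p G)" using pinned D by blast
  moreover have "restrict w (V - D) \<in> configs (V - D)" for w
    unfolding configs_def by auto
  ultimately have "minor (pin D p F) (pin D p G) (restrict y (V - D)) (restrict z (V - D)) = 0"
    unfolding lin_dep_iff_minors by blast
  moreover have "pin D p H (restrict y (V - D)) = H y" for H
    unfolding p_def by (rule pin_restrict[OF y])
  moreover have "pin D p H (restrict z (V - D)) = H z" for H
    unfolding p_z by (rule pin_restrict[OF z])
  ultimately show ?thesis unfolding minor_def by (simp only:)
qed

lemma minors_vanish_imp_zero:
  assumes d: "minor F G y z \<noteq> 0" and wz: "minor F G w z = 0" and wy: "minor F G w y = 0"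
  shows "F w = 0 \<and> G w = 0"
proof -
  have "F w * minor F G y z = F y * minor F G w z - F z * minor F G w y"
    "G w * minor F G y z = G y * minor F G w z - G z * minor F G w y"
    by (simp_all add: minor_def algebra_simps)
  then show ?thesis using d wz wy by simp
qed

theorem mainTheorem7:
  fixes V :: "'v set" and F G :: "('v \<Rightarrow> bool) \<Rightarrow> real"
  assumes "finite V"
    and "is_signature V F" and "is_signature V G"
    and "\<not> lin_dep V F G"
    and "\<And>D p. D \<subseteq> V \<Longrightarrow> D \<noteq> {} \<Longrightarrow> p \<in> configs D \<Longrightarrow>
           lin_dep (V - D) (pin D p F) (pin D p G)"
  shows "\<exists>x\<in>supp V F. supp V F \<union> supp V G = {x, compl_config V x}"
proof -
  have agree: "minor F G a b = 0"
    if "a \<in> configs V" "b \<in> configs V" "v \<in> V" "a v = b v" for a b v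
    by (rule agree_minor_zero[OF assms(5) that(1,2), of "{v}"]) (use that in auto)
  obtain y z where y: "y \<in> configs V" and z: "z \<in> configs V" and d: "minor F G y z \<noteq> 0"
    using assms(4) unfolding lin_dep_iff_minors by blast
  have disagree: "y v \<noteq> z v" if "v \<in> V" for v using agree[OF y z that] d by blast
  have zc: "z = compl_config V y" by (rule disagree_everywhere_compl[OF y z disagree])
  have only_yz: "w = y \<or> w = z" if w: "w \<in> configs V" and nz: "F w \<noteq> 0 \<or> G w \<noteq> 0" for w
  proof (rule ccontr)
    assume "\<not> (w = y \<or> w = z)"
    then obtain u v where "u \<in> V" "w u \<noteq> y u" "v \<in> V" "w v \<noteq> z v"
      using configs_ext[OF w y] configs_ext[OF w z] by metis
    then have "minor F G w z = 0" "minor F G w y = 0"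
      using agree[OF w z, of u] agree[OF w y, of v] disagree by auto
    then show False using minors_vanish_imp_zero[OF d] nz by blast
  qed
  have support: "supp V F \<union> supp V G = {y, z}"
  proof
    show "supp V F \<union> supp V G \<subseteq> {y, z}" using only_yz unfolding supp_def by blast
    have "F y \<noteq> 0 \<or> G y \<noteq> 0" "F z \<noteq> 0 \<or> G z \<noteq> 0" using d by (auto simp: minor_def)
    then show "{y, z} \<subseteq> supp V F \<union> supp V G" using y z unfolding supp_def by blast
  qed
  have "F y \<noteq> 0 \<or> F z \<noteq> 0" using d by (auto simp: minor_def)
  then consider "y \<in> supp V F" | "z \<in> supp V F" using y z unfolding supp_def by blast
  then show ?thesis
  proof cases
    case 1
    then show ?thesis using support zc by blast
  next
    case 2
    moreover have "supp V F \<union> supp V G = {z, compl_config V z}"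
      using support zc compl_config_compl_config[OF y] by auto
    ultimately show ?thesis by blast
  qed
qed

end
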